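(* Let $s$ be a stream over $\Sigma$ with hidden PFSA generator $G_s$, let $W$ be the zero model (flat white noise generator), and let $\epsilon>0$. With $\ell=\ln(1/\epsilon)/\ln|\Sigma|$, $$\lim_{|s|\to\infty}|\Theta(G_s,W)-\hat{\zeta}(s,\ell)|\le\epsilon.$$
   Context: $\Sigma=\{\sigma_1,\dots,\sigma_{|\Sigma|}\}$ is finite, $\Sigma^\star$ the finite strings, $|x|$ the length of $x$. For a string $s$, $\#^s(y)$ is the overlapping count of $y$ in $s$; symbolic derivative $\phi^s(x)|_i=\#^s(x\sigma_i)/\sum_j\#^s(x\sigma_j)$; $\mathcal{U}_\Sigma$ is the uniform distribution on $\Sigma$. $W$ is the single-state PFSA emitting each symbol i.i.d. with probability $1/|\Sigma|$. $\Theta(G_1,G_2)=\frac{|\Sigma|-1}{|\Sigma|}\lim_{|s_1|,|s_2|\to\infty}\sum_{x\in\Sigma^\star}\|\phi^{s_1}(x)-\phi^{s_2}(x)\|_\infty/|\Sigma|^{2|x|}$ for $s_i$ generated by $G_i$. The partial white noise deviation estimator is $\hat{\zeta}(s,\ell)=\frac{|\Sigma|-1}{|\Sigma|}\sum_{x\in\Sigma^\star,\,|x|\le\ell}\frac{1}{|\Sigma|^{2|x|}}\|\phi^s(x)-\mathcal{U}_\Sigma\|_\infty$, i.e. the sum restricted to strings of length at most $\ell$. *)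

theory Defs
  imports "HOL-Probability.Probability"
begin

text \<open>A PFSA over alphabet 'a with (finite) state type 'q: transition map delta,
  symbol emission probabilities pitilde (the transition on a symbol is only "defined"
  when its probability is positive), and a start state.\<close>

record ('q, 'a) pfsa =
  delta   :: "'q \<Rightarrow> 'a \<Rightarrow> 'q"
  pitilde :: "'q \<Rightarrow> 'a \<Rightarrow> real"
  init    :: "'q"

definition is_pfsa :: "('q::finite, 'a::finite) pfsa \<Rightarrow> bool" where
  "is_pfsa G \<longleftrightarrow> (\<forall>q a. pitilde G q a \<ge> 0) \<and> (\<forall>q. (\<Sum>a\<in>UNIV. pitilde G q a) = 1)"

fun delta_star :: "('q, 'a) pfsa \<Rightarrow> 'q \<Rightarrow> 'a list \<Rightarrow> 'q" where
  "delta_star G q [] = q"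
| "delta_star G q (a # w) = delta_star G (delta G q a) w"

fun word_prob :: "('q, 'a) pfsa \<Rightarrow> 'q \<Rightarrow> 'a list \<Rightarrow> real" where
  "word_prob G q [] = 1"
| "word_prob G q (a # w) = pitilde G q a * word_prob G (delta G q a) w"

definition strongly_connected :: "('q, 'a) pfsa \<Rightarrow> bool" where
  "strongly_connected G \<longleftrightarrow>
     (\<forall>q q'. \<exists>w. word_prob G q w > 0 \<and> delta_star G q w = q')"

definition is_stream_law :: "('q, 'a) pfsa \<Rightarrow> 'a stream measure \<Rightarrow> bool" where
  "is_stream_law G M \<longleftrightarrow> prob_space M \<and>
     sets M = sets (stream_space (count_space UNIV)) \<and>
     (\<forall>w. emeasure M {\<omega> \<in> space M. stake (length w) \<omega> = w} = ennreal (word_prob G (init G) w))"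

definition W :: "(unit, 'a::finite) pfsa" where
  "W = \<lparr> delta = (\<lambda>_ _. ()), pitilde = (\<lambda>_ _. 1 / real CARD('a)), init = () \<rparr>"

definition occ_count :: "'a list \<Rightarrow> 'a list \<Rightarrow> nat" where
  "occ_count s y = card {i. i + length y \<le> length s \<and> take (length y) (drop i s) = y}"

definition sym_deriv :: "'a list \<Rightarrow> 'a list \<Rightarrow> 'a::finite \<Rightarrow> real" where
  "sym_deriv s x \<sigma> = real (occ_count s (x @ [\<sigma>])) / (\<Sum>\<tau>\<in>UNIV. real (occ_count s (x @ [\<tau>])))"

definition unif :: "'a::finite \<Rightarrow> real" where
  "unif \<sigma> = 1 / real CARD('a)"

definition sup_norm :: "('a::finite \<Rightarrow> real) \<Rightarrow> real" where
  "sup_norm f = Max (range (\<lambda>\<sigma>. \<bar>f \<sigma>\<bar>))"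

definition theta_sum :: "'a::finite list \<Rightarrow> 'a list \<Rightarrow> real" where
  "theta_sum s1 s2 = (real CARD('a) - 1) / real CARD('a) *
     infsum (\<lambda>x. sup_norm (\<lambda>\<sigma>. sym_deriv s1 x \<sigma> - sym_deriv s2 x \<sigma>) / real CARD('a) ^ (2 * length x)) UNIV"

definition Theta :: "('q1, 'a::finite) pfsa \<Rightarrow> ('q2, 'a) pfsa \<Rightarrow> real" where
  "Theta G1 G2 = (THE \<theta>. \<forall>M1 M2. is_stream_law G1 M1 \<longrightarrow> is_stream_law G2 M2 \<longrightarrow>
      (AE \<omega> in M1 \<Otimes>\<^sub>M M2.
         ((\<lambda>(n1, n2). theta_sum (stake n1 (fst \<omega>)) (stake n2 (snd \<omega>))) \<longlongrightarrow> \<theta>)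
           (sequentially \<times>\<^sub>F sequentially)))"

definition zeta_hat :: "'a::finite list \<Rightarrow> real \<Rightarrow> real" where
  "zeta_hat s l = (real CARD('a) - 1) / real CARD('a) *
     (\<Sum>x\<in>{x :: 'a list. real (length x) \<le> l}.
        sup_norm (\<lambda>\<sigma>. sym_deriv s x \<sigma> - unif \<sigma>) / real CARD('a) ^ (2 * length x))"

end

theory Submission
  imports Defs "HOL-Library.Discrete_Functions"
begin

text \<open>
  For a strongly connected PFSA with transition operator \<open>P\<close> the Poisson equation
  \<open>f = g - P g + c\<close> is solvable for every \<open>f\<close>, because by the minimum principle the kernel of
  \<open>I - P\<close> consists of the constants. Take \<open>f q\<close> to be the probability of emitting the word \<open>y\<close>
  from state \<open>q\<close>. Along a generated stream the indicator that \<open>y\<close> starts at time \<open>i\<close> is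
  \<open>f\<close> of the current state plus a centred innovation, and \<open>f - c\<close> of the current state is the
  value of \<open>g\<close> at the next state minus its conditional expectation plus a telescoping term.
  So the number of occurrences of \<open>y\<close> in a prefix of length \<open>n\<close> is \<open>n c\<close> plus bounded
  innovations that are uncorrelated at distance \<open>|y|\<close>, plus \<open>O(1)\<close>. Their sum has second
  moment \<open>O(n)\<close>, so Chebyshev's inequality and Borel-Cantelli along the squares, together with
  the bounded increments between squares, give the strong law: the frequency of \<open>y\<close> tends to
  \<open>c\<close> almost surely. Hence all symbolic derivatives converge almost surely, for the white
  noise model \<open>W\<close> to the uniform distribution. By dominated convergence \<open>\<Theta>(G, W)\<close> is the
  weighted distance of the limiting derivatives of \<open>G\<close> from the uniform one, and
  \<open>zeta_hat s \<ell>\<close> converges to the same sum restricted to strings of length at most \<open>\<ell>\<close>.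
  The remaining strings have total weight at most \<open>|\<Sigma>| ^ -K\<close> with \<open>K > \<ell>\<close>, which is
  less than \<open>\<epsilon>\<close> by the choice of \<open>\<ell>\<close>.
\<close>

section \<open>Words emitted by a PFSA\<close>

lemma delta_star_append: "delta_star G q (u @ v) = delta_star G (delta_star G q u) v"
  by (induction u arbitrary: q) auto

lemma word_prob_append: "word_prob G q (u @ v) = word_prob G q u * word_prob G (delta_star G q u) v"
  by (induction u arbitrary: q) auto

lemma word_prob_nonneg: "is_pfsa G \<Longrightarrow> 0 \<le> word_prob G q w"
  by (induction w arbitrary: q) (auto simp: is_pfsa_def)

lemma finite_lists_of_length [simp]: "finite {w :: 'a::finite list. length w = n}"
  using finite_lists_length_eq[of "UNIV :: 'a set" n] by simp

lemma sum_lists_length_Suc: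
  fixes f :: "'a::finite list \<Rightarrow> 'b::comm_monoid_add"
  shows "(\<Sum>w | length w = Suc n. f w) = (\<Sum>a\<in>UNIV. \<Sum>w | length w = n. f (a # w))"
proof -
  have "{w. length w = Suc n} = (\<lambda>(a, w). a # w) ` (UNIV \<times> {w :: 'a list. length w = n})"
    by (auto simp: image_iff length_Suc_conv)
  moreover have "inj_on (\<lambda>(a, w). a # w) (UNIV \<times> {w :: 'a list. length w = n})"
    by (auto simp: inj_on_def)
  ultimately have "(\<Sum>w | length w = Suc n. f w) = (\<Sum>(a, w) \<in> UNIV \<times> {w. length w = n}. f (a # w))"
    by (simp add: sum.reindex case_prod_unfold)
  then show ?thesis
    by (simp add: sum.cartesian_product)
qed

lemma sum_lists_length_add:
  fixes f :: "'a::finite list \<Rightarrow> 'b::comm_monoid_add"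
  shows "(\<Sum>w | length w = m + n. f w) = (\<Sum>u | length u = m. \<Sum>v | length v = n. f (u @ v))"
proof (induction m arbitrary: f)
  case 0
  then show ?case by simp
next
  case (Suc m)
  then show ?case by (simp add: sum_lists_length_Suc)
qed

lemma sum_word_prob_length:
  assumes "is_pfsa G"
  shows "(\<Sum>w | length w = n. word_prob G q w) = 1"
proof (induction n arbitrary: q)
  case 0
  then show ?case by simp
next
  case (Suc n)
  then show ?case
    using assms by (simp add: sum_lists_length_Suc sum_distrib_left[symmetric] is_pfsa_def)
qed

lemma word_prob_Cons_pos:
  assumes "is_pfsa G" "word_prob G q (a # w) > 0"
  shows "pitilde G q a > 0" "word_prob G (delta G q a) w > 0"
proof -
  have "pitilde G q a \<ge> 0" "word_prob G (delta G q a) w \<ge> 0"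
    using assms(1) word_prob_nonneg[OF assms(1)] by (auto simp: is_pfsa_def)
  with assms(2) show "pitilde G q a > 0" "word_prob G (delta G q a) w > 0"
    by (auto simp: zero_less_mult_iff)
qed

lemma delta_star_in_closed_set:
  assumes "is_pfsa G" "q \<in> S" "word_prob G q w > 0"
    and closed: "\<And>q a. q \<in> S \<Longrightarrow> pitilde G q a > 0 \<Longrightarrow> delta G q a \<in> S"
  shows "delta_star G q w \<in> S"
  using assms(2,3)
proof (induction w arbitrary: q)
  case Nil
  then show ?case by simp
next
  case (Cons a w)
  with word_prob_Cons_pos[OF assms(1) Cons.prems(2)] closed show ?case by simp
qed

lemma is_pfsa_W: "is_pfsa (W :: (unit, 'a::finite) pfsa)"
  by (simp add: is_pfsa_def W_def)

lemma strongly_connected_W: "strongly_connected (W :: (unit, 'a::finite) pfsa)"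
  unfolding strongly_connected_def by (intro allI exI[of _ "[]"]) simp

lemma word_prob_W: "word_prob (W :: (unit, 'a::finite) pfsa) q y = (1 / real CARD('a)) ^ length y"
  by (induction y arbitrary: q) (simp_all add: W_def)

section \<open>The Poisson equation of a strongly connected PFSA\<close>

definition trans_op :: "('q, 'a::finite) pfsa \<Rightarrow> ('q \<Rightarrow> real) \<Rightarrow> 'q \<Rightarrow> real" where
  "trans_op G g q = (\<Sum>a\<in>UNIV. pitilde G q a * g (delta G q a))"

lemma trans_op_add: "trans_op G (\<lambda>q. u q + v q) q = trans_op G u q + trans_op G v q"
  by (simp add: trans_op_def distrib_left sum.distrib)

lemma trans_op_scale: "trans_op G (\<lambda>q. r * u q) q = r * trans_op G u q"
  by (simp add: trans_op_def sum_distrib_left mult_ac)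

lemma trans_op_const: "is_pfsa G \<Longrightarrow> trans_op G (\<lambda>_. c) q = c"
  by (simp add: trans_op_def is_pfsa_def sum_distrib_right[symmetric])

lemma trans_op_mono: "is_pfsa G \<Longrightarrow> (\<And>p. u p \<le> v p) \<Longrightarrow> trans_op G u q \<le> trans_op G v q"
  unfolding trans_op_def is_pfsa_def by (intro sum_mono mult_left_mono) auto

lemma superharmonic_const:
  fixes G :: "('q::finite, 'a::finite) pfsa"
  assumes pf: "is_pfsa G" and sc: "strongly_connected G" and super: "\<And>q. trans_op G g q \<le> g q"
  shows "g q = g q'"
proof -
  define m where "m = Min (range g)"
  have m_le: "m \<le> g p" for p
    unfolding m_def by simp
  have "m \<in> range g"
    unfolding m_def by (rule Min_in) auto
  then obtain q0 where q0: "g q0 = m"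
    by auto
  \<comment> \<open>minimum principle: the set where the minimum is attained is closed under transitions\<close>
  have closed: "g (delta G p a) = m" if "g p = m" "pitilde G p a > 0" for p a
  proof (rule ccontr)
    assume "g (delta G p a) \<noteq> m"
    with m_le[of "delta G p a"] have gt: "g (delta G p a) > m"
      by simp
    have "pitilde G p a * (g (delta G p a) - m) \<le> (\<Sum>b\<in>UNIV. pitilde G p b * (g (delta G p b) - m))"
      using pf m_le by (intro member_le_sum) (auto simp: is_pfsa_def)
    also have "\<dots> = trans_op G g p - m"
      using pf by (simp add: trans_op_def is_pfsa_def algebra_simps sum_subtractf
          sum_distrib_left[symmetric])
    also have "\<dots> \<le> 0"
      using super[of p] that(1) by simp
    finally show False
      using that(2) gt by (simp add: mult_le_0_iff)
  qed
  have "g p = m" for p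
  proof -
    obtain w where w: "word_prob G q0 w > 0" "delta_star G q0 w = p"
      using sc unfolding strongly_connected_def by blast
    have "delta_star G q0 w \<in> {p. g p = m}"
      by (rule delta_star_in_closed_set[OF pf _ w(1)]) (use q0 closed in auto)
    then show ?thesis
      using w(2) by simp
  qed
  then show ?thesis
    by simp
qed

lemma poisson_homogeneous:
  fixes G :: "('q::finite, 'a::finite) pfsa"
  assumes pf: "is_pfsa G" and sc: "strongly_connected G"
    and hom: "\<And>q. g q - trans_op G g q = c"
  shows "c = 0" and "g q = g q'"
proof -
  show const: "g q = g q'" for q q'
  proof (cases "0 \<le> c")
    case True
    show ?thesis
    proof (rule superharmonic_const[OF pf sc])
      show "trans_op G g p \<le> g p" for p
        using hom[of p] True by linarith
    qed
  next
    case False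
    have "- g q = - g q'"
    proof (rule superharmonic_const[OF pf sc])
      fix p
      show "trans_op G (\<lambda>q. - g q) p \<le> - g p"
        using trans_op_scale[of G "- 1" g p] hom[of p] False by simp
    qed
    then show ?thesis
      by simp
  qed
  obtain q0 :: 'q where True
    by simp
  have "trans_op G g q0 = trans_op G (\<lambda>_. g q0) q0"
    unfolding trans_op_def using const[of _ q0] by (intro sum.cong) auto
  then show "c = 0"
    using hom[of q0] trans_op_const[OF pf] by simp
qed

text \<open>Normalising \<open>g\<close> to vanish at a fixed state \<open>q0\<close> and storing \<open>c\<close> in that coordinate,
  \<open>(g, c) \<mapsto> g - P g + c\<close> becomes a linear endomorphism of \<open>real^'q\<close>; it is injective by
  the homogeneous case, hence onto.\<close>

lemma poisson_equation_solvable: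
  fixes f :: "'q::finite \<Rightarrow> real" and G :: "('q, 'a::finite) pfsa"
  assumes pf: "is_pfsa G" and sc: "strongly_connected G"
  shows "\<exists>g c. \<forall>q. f q = g q - trans_op G g q + c"
proof -
  obtain q0 :: 'q where True
    by simp
  define cut where "cut h = (\<lambda>q. if q = q0 then 0 else h $ q)" for h :: "real^'q"
  define T where "T h = (\<chi> q. cut h q - trans_op G (cut h) q + h $ q0)" for h :: "real^'q"
  have "linear T"
  proof (rule linearI)
    have "cut (x + y) = (\<lambda>q. cut x q + cut y q)" for x y
      by (auto simp: cut_def)
    then show "T (x + y) = T x + T y" for x y
      unfolding vec_eq_iff by (simp add: T_def trans_op_add)
    have "cut (r *\<^sub>R x) = (\<lambda>q. r * cut x q)" for r x
      by (auto simp: cut_def)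
    then show "T (r *\<^sub>R x) = r *\<^sub>R T x" for r x
      unfolding vec_eq_iff by (simp add: T_def trans_op_scale algebra_simps)
  qed
  moreover have "inj T"
  proof (rule linear_inj_iff_eq_0[THEN iffD2, OF \<open>linear T\<close>], intro allI impI)
    fix h
    assume "T h = 0"
    have hom: "cut h q - trans_op G (cut h) q = - h $ q0" for q
    proof -
      have "T h $ q = 0"
        using \<open>T h = 0\<close> by simp
      then show ?thesis
        by (simp add: T_def)
    qed
    from poisson_homogeneous[OF pf sc hom] have "h $ q0 = 0" "cut h q = cut h q0" for q
      by simp_all
    then show "h = 0"
      unfolding vec_eq_iff by (metis cut_def zero_index)
  qed
  ultimately obtain h where "T h = (\<chi> q. f q)"
    by (metis linear_inj_imp_surj surjD)
  then have "f q = cut h q - trans_op G (cut h) q + h $ q0" for q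
    by (simp add: vec_eq_iff T_def)
  then show ?thesis
    by blast
qed

text \<open>The constant of the Poisson equation for \<open>q \<mapsto> word_prob G q y\<close>; it is the long-run
  frequency of \<open>y\<close>, and it is uniquely determined when \<open>G\<close> is strongly connected.\<close>

definition stationary_freq :: "('q::finite, 'a::finite) pfsa \<Rightarrow> 'a list \<Rightarrow> real" where
  "stationary_freq G y = (SOME c. \<exists>g. \<forall>q. word_prob G q y = g q - trans_op G g q + c)"

lemma stationary_freq_eq:
  fixes G :: "('q::finite, 'a::finite) pfsa"
  assumes pf: "is_pfsa G" and sc: "strongly_connected G"
    and sol: "\<And>q. word_prob G q y = g q - trans_op G g q + c"
  shows "stationary_freq G y = c"
proof -
  have "\<exists>g. \<forall>q. word_prob G q y = g q - trans_op G g q + stationary_freq G y"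
    unfolding stationary_freq_def by (rule someI_ex) (use sol in blast)
  then obtain g' where sol': "\<And>q. word_prob G q y = g' q - trans_op G g' q + stationary_freq G y"
    by blast
  have "(\<lambda>q. g q - g' q) q - trans_op G (\<lambda>q. g q - g' q) q = stationary_freq G y - c" for q
    using sol[of q] sol'[of q] trans_op_add[of G g "\<lambda>q. - g' q" q] trans_op_scale[of G "- 1" g' q]
    by simp
  from poisson_homogeneous(1)[OF pf sc this] show ?thesis
    by simp
qed

lemma stationary_freq_poisson:
  fixes G :: "('q::finite, 'a::finite) pfsa"
  assumes "is_pfsa G" "strongly_connected G"
  obtains g where "\<And>q. word_prob G q y = g q - trans_op G g q + stationary_freq G y"
  using poisson_equation_solvable[OF assms, of "\<lambda>q. word_prob G q y"] stationary_freq_eq[OF assms]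
  by metis

lemma stationary_freq_nonneg:
  fixes G :: "('q::finite, 'a::finite) pfsa"
  assumes pf: "is_pfsa G" and sc: "strongly_connected G"
  shows "0 \<le> stationary_freq G y"
proof -
  obtain g where sol: "\<And>q. word_prob G q y = g q - trans_op G g q + stationary_freq G y"
    using stationary_freq_poisson[OF pf sc] by blast
  have "Min (range g) \<in> range g"
    by (rule Min_in) auto
  then obtain q where q: "g q = Min (range g)"
    by (metis rangeE)
  \<comment> \<open>at a minimum of \<open>g\<close> the term \<open>g - P g\<close> is nonpositive\<close>
  have "g q = trans_op G (\<lambda>_. g q) q"
    by (simp add: trans_op_const[OF pf])
  also have "\<dots> \<le> trans_op G g q"
    using q by (intro trans_op_mono[OF pf]) simp
  finally show ?thesis
    using sol[of q] word_prob_nonneg[OF pf, of q y] by linarith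
qed

lemma stationary_freq_W: "stationary_freq (W :: (unit, 'a::finite) pfsa) y = (1 / real CARD('a)) ^ length y"
  by (rule stationary_freq_eq[OF is_pfsa_W strongly_connected_W, where g = "\<lambda>_. 0"])
    (simp add: word_prob_W trans_op_def)

section \<open>Functions of finite prefixes of a generated stream\<close>

locale stream_law =
  fixes G :: "('q::finite, 'a::finite) pfsa" and M :: "'a stream measure"
  assumes pfsa: "is_pfsa G" and law: "is_stream_law G M"
begin

sublocale prob_space M
  using law by (simp add: is_stream_law_def)

lemma sets_law: "sets M = sets (stream_space (count_space UNIV))"
  using law by (simp add: is_stream_law_def)

lemma measurable_stake_law [measurable]: "stake n \<in> measurable M (count_space UNIV)"
  using measurable_stake[of n] by (subst measurable_cong_sets[OF sets_law refl])

lemma cylinder_sets: "{\<omega> \<in> space M. stake n \<omega> = w} \<in> sets M"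
  by measurable

lemma measure_cylinder:
  "length w = n \<Longrightarrow> measure M {\<omega> \<in> space M. stake n \<omega> = w} = word_prob G (init G) w"
  using law word_prob_nonneg[OF pfsa] by (auto simp: is_stream_law_def measure_def)

lemma prefix_fun_eq_sum:
  assumes "\<omega> \<in> space M"
  shows "h (stake n \<omega>) =
    (\<Sum>w | length w = n. indicator {\<omega> \<in> space M. stake n \<omega> = w} \<omega> * (h w :: real))"
proof -
  have "(\<Sum>w | length w = n. indicator {\<omega> \<in> space M. stake n \<omega> = w} \<omega> * h w) =
      (\<Sum>w\<in>{stake n \<omega>}. h w)"
    using assms by (intro sum.mono_neutral_cong_right) (auto simp: indicator_def)
  then show ?thesis
    by simp
qed

lemma integrable_cylinder_indicator:
  "integrable M (\<lambda>\<omega>. indicator {\<omega> \<in> space M. stake n \<omega> = w} \<omega> * (c :: real))"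
  using cylinder_sets[of n w] by (simp add: integrable_indicator_iff Int_absorb2 less_top[symmetric])

lemma integrable_prefix_fun [simp]: "integrable M (\<lambda>\<omega>. h (stake n \<omega>) :: real)"
proof -
  have "integrable M (\<lambda>\<omega>. \<Sum>w | length w = n. indicator {\<omega> \<in> space M. stake n \<omega> = w} \<omega> * h w)"
    by (intro Bochner_Integration.integrable_sum integrable_cylinder_indicator)
  then show ?thesis
    by (rule Bochner_Integration.integrable_cong[THEN iffD1, OF refl, rotated])
      (simp add: prefix_fun_eq_sum)
qed

lemma integral_prefix_fun:
  "(\<integral>\<omega>. h (stake n \<omega>) \<partial>M) = (\<Sum>w | length w = n. word_prob G (init G) w * (h w :: real))"
proof -
  have "(\<integral>\<omega>. h (stake n \<omega>) \<partial>M) =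
      (\<integral>\<omega>. (\<Sum>w | length w = n. indicator {\<omega> \<in> space M. stake n \<omega> = w} \<omega> * h w) \<partial>M)"
    by (intro Bochner_Integration.integral_cong refl) (simp add: prefix_fun_eq_sum)
  also have "\<dots> = (\<Sum>w | length w = n. \<integral>\<omega>. indicator {\<omega> \<in> space M. stake n \<omega> = w} \<omega> * h w \<partial>M)"
    by (intro Bochner_Integration.integral_sum integrable_cylinder_indicator)
  also have "\<dots> = (\<Sum>w | length w = n. word_prob G (init G) w * h w)"
    by (intro sum.cong refl) (simp add: cylinder_sets measure_cylinder)
  finally show ?thesis .
qed

lemma AE_not_occurs_if_word_prob_zero:
  assumes zero: "\<And>q. word_prob G q y = 0"
  shows "AE \<omega> in M. \<forall>i. stake (length y) (sdrop i \<omega>) \<noteq> y"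
proof -
  have "AE \<omega> in M. stake (length y) (sdrop i \<omega>) \<noteq> y" for i
  proof -
    define Z where "Z w = (of_bool (drop i w = y) :: real)" for w
    have "(\<integral>\<omega>. Z (stake (i + length y) \<omega>) \<partial>M) =
        (\<Sum>u | length u = i. \<Sum>v | length v = length y. word_prob G (init G) (u @ v) * Z (u @ v))"
      by (simp add: integral_prefix_fun[of Z] sum_lists_length_add)
    also have "\<dots> = 0"
      by (intro sum.neutral ballI) (auto simp: Z_def word_prob_append zero)
    moreover have "AE \<omega> in M. 0 \<le> Z (stake (i + length y) \<omega>)"
      by (simp add: Z_def)
    ultimately have "AE \<omega> in M. Z (stake (i + length y) \<omega>) = 0"
      using integral_nonneg_eq_0_iff_AE[OF integrable_prefix_fun] by simp
    then show ?thesis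
      by eventually_elim (simp add: Z_def drop_stake)
  qed
  then show ?thesis
    by (simp add: AE_all_countable)
qed

end

section \<open>A strong law for centred observations of the state sequence\<close>

context stream_law
begin

definition state_at :: "nat \<Rightarrow> 'a stream \<Rightarrow> 'q" where
  "state_at i \<omega> = delta_star G (init G) (stake i \<omega>)"

definition expect_word :: "('q \<Rightarrow> 'a list \<Rightarrow> real) \<Rightarrow> nat \<Rightarrow> 'q \<Rightarrow> real" where
  "expect_word H k q = (\<Sum>v | length v = k. word_prob G q v * H q v)"

text \<open>\<open>expect_word H k (state_at i \<omega>)\<close> is the conditional expectation of
  \<open>H (state_at i \<omega>) (stake k (sdrop i \<omega>))\<close> given the first \<open>i\<close> symbols, so innovations
  at distance at least \<open>k\<close> are uncorrelated.\<close>

definition innovation :: "('q \<Rightarrow> 'a list \<Rightarrow> real) \<Rightarrow> nat \<Rightarrow> nat \<Rightarrow> 'a stream \<Rightarrow> real" where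
  "innovation H k i \<omega> = H (state_at i \<omega>) (stake k (sdrop i \<omega>)) - expect_word H k (state_at i \<omega>)"

definition innovation_word :: "('q \<Rightarrow> 'a list \<Rightarrow> real) \<Rightarrow> nat \<Rightarrow> nat \<Rightarrow> 'a list \<Rightarrow> real" where
  "innovation_word H k i w =
    H (delta_star G (init G) (take i w)) (drop i w) - expect_word H k (delta_star G (init G) (take i w))"

lemma innovation_eq_word: "innovation H k i \<omega> = innovation_word H k i (stake (i + k) \<omega>)"
  by (simp add: innovation_def innovation_word_def state_at_def take_stake drop_stake)

lemma borel_measurable_innovation [measurable]: "innovation H k i \<in> borel_measurable M"
  unfolding innovation_eq_word by measurable

lemma expect_word_bound:
  assumes "\<And>q v. \<bar>H q v\<bar> \<le> B"
  shows "\<bar>expect_word H k q\<bar> \<le> B"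
proof -
  have "\<bar>expect_word H k q\<bar> \<le> (\<Sum>v | length v = k. word_prob G q v * \<bar>H q v\<bar>)"
    unfolding expect_word_def using sum_abs[of "\<lambda>v. word_prob G q v * H q v"]
    by (simp add: abs_mult word_prob_nonneg[OF pfsa])
  also have "\<dots> \<le> (\<Sum>v | length v = k. word_prob G q v * B)"
    using assms word_prob_nonneg[OF pfsa] by (intro sum_mono mult_left_mono) auto
  also have "\<dots> = B"
    by (simp add: sum_distrib_right[symmetric] sum_word_prob_length[OF pfsa])
  finally show ?thesis .
qed

lemma innovation_bound:
  assumes "\<And>q v. \<bar>H q v\<bar> \<le> B"
  shows "\<bar>innovation H k i \<omega>\<bar> \<le> 2 * B"
  using assms[of "state_at i \<omega>" "stake k (sdrop i \<omega>)"]
    expect_word_bound[where H = H and k = k and q = "state_at i \<omega>", OF assms]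
  unfolding innovation_def by linarith

lemma integral_prefix_fun_mult_innovation:
  "(\<integral>\<omega>. F (stake j \<omega>) * innovation H k j \<omega> \<partial>M) = 0"
proof -
  have inner: "(\<Sum>v | length v = k.
      word_prob G (init G) (u @ v) * (F u * innovation_word H k j (u @ v))) = 0"
    if "length u = j" for u
  proof -
    define q where "q = delta_star G (init G) u"
    have "(\<Sum>v | length v = k.
        word_prob G (init G) (u @ v) * (F u * innovation_word H k j (u @ v)))
      = (\<Sum>v | length v = k. word_prob G (init G) u * F u *
          (word_prob G q v * H q v - word_prob G q v * expect_word H k q))"
      using that by (intro sum.cong refl)
        (simp add: word_prob_append innovation_word_def q_def algebra_simps)
    also have "\<dots> = word_prob G (init G) u * F u *
        (expect_word H k q - (\<Sum>v | length v = k. word_prob G q v) * expect_word H k q)"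
      by (simp add: sum_distrib_left[symmetric] sum_subtractf sum_distrib_right[symmetric]
          expect_word_def)
    finally show ?thesis
      by (simp add: sum_word_prob_length[OF pfsa])
  qed
  have "(\<integral>\<omega>. F (stake j \<omega>) * innovation H k j \<omega> \<partial>M) =
      (\<integral>\<omega>. (\<lambda>w. F (take j w) * innovation_word H k j w) (stake (j + k) \<omega>) \<partial>M)"
    by (simp add: innovation_eq_word take_stake)
  also have "\<dots> = (\<Sum>w | length w = j + k. word_prob G (init G) w * (F (take j w) * innovation_word H k j w))"
    by (rule integral_prefix_fun)
  also have "\<dots> = (\<Sum>u | length u = j. \<Sum>v | length v = k.
      word_prob G (init G) (u @ v) * (F (take j (u @ v)) * innovation_word H k j (u @ v)))"
    by (rule sum_lists_length_add)
  also have "\<dots> = (\<Sum>u | length u = j. \<Sum>v | length v = k.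
      word_prob G (init G) (u @ v) * (F u * innovation_word H k j (u @ v)))"
    by (intro sum.cong refl) simp
  also have "\<dots> = 0"
    using inner by (intro sum.neutral) simp
  finally show ?thesis .
qed

lemma integral_innovation_mult_innovation:
  assumes "i + k \<le> j"
  shows "(\<integral>\<omega>. innovation H k i \<omega> * innovation H k j \<omega> \<partial>M) = 0"
proof -
  have "innovation H k i \<omega> = (\<lambda>w. innovation_word H k i (take (i + k) w)) (stake j \<omega>)" for \<omega>
    using assms by (simp add: innovation_eq_word take_stake min_def)
  then show ?thesis
    using integral_prefix_fun_mult_innovation[of "\<lambda>w. innovation_word H k i (take (i + k) w)" j H k]
    by simp
qed

lemma card_close_indices: "card {j. j < n \<and> j < i + k \<and> i < j + k} \<le> 2 * k"
proof -
  have "card {j. j < n \<and> j < i + k \<and> i < j + k} \<le> card {i + 1 - k..<i + k}"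
    by (intro card_mono) auto
  then show ?thesis
    by simp
qed

lemma integral_innovation_sum_square_le:
  assumes bound: "\<And>q v. \<bar>H q v\<bar> \<le> B"
  shows "(\<integral>\<omega>. (\<Sum>i<n. innovation H k i \<omega>)\<^sup>2 \<partial>M) \<le> 2 * real k * (2 * B)\<^sup>2 * real n"
proof -
  let ?e = "innovation H k"
  have B: "0 \<le> B"
    using bound[of undefined undefined] by linarith
  have prod_bound: "\<bar>?e i \<omega> * ?e j \<omega>\<bar> \<le> (2 * B)\<^sup>2" for i j \<omega>
    unfolding abs_mult power2_eq_square using B
    by (intro mult_mono innovation_bound[OF bound]) auto
  have int: "integrable M (\<lambda>\<omega>. ?e i \<omega> * ?e j \<omega>)" for i j
    using prod_bound by (intro integrable_const_bound[where B = "(2 * B)\<^sup>2"]) auto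
  have "\<bar>\<integral>\<omega>. ?e i \<omega> * ?e j \<omega> \<partial>M\<bar> \<le> (2 * B)\<^sup>2" for i j
    using order_trans[OF integral_abs_bound
        integral_mono[OF integrable_abs[OF int] integrable_const prod_bound]]
    by (simp add: prob_space)
  then have cov_le: "(\<integral>\<omega>. ?e i \<omega> * ?e j \<omega> \<partial>M) \<le> (2 * B)\<^sup>2" for i j
    by (simp add: abs_le_iff)
  have row: "(\<Sum>j<n. \<integral>\<omega>. ?e i \<omega> * ?e j \<omega> \<partial>M) \<le> 2 * real k * (2 * B)\<^sup>2" for i
  proof -
    let ?S = "{j. j < n \<and> j < i + k \<and> i < j + k}"
    have "(\<Sum>j<n. \<integral>\<omega>. ?e i \<omega> * ?e j \<omega> \<partial>M) = (\<Sum>j\<in>?S. \<integral>\<omega>. ?e i \<omega> * ?e j \<omega> \<partial>M)"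
    proof (intro sum.mono_neutral_right ballI)
      fix j
      assume "j \<in> {..<n} - ?S"
      then have "i + k \<le> j \<or> j + k \<le> i"
        by auto
      then show "(\<integral>\<omega>. ?e i \<omega> * ?e j \<omega> \<partial>M) = 0"
        using integral_innovation_mult_innovation[of i k j H] integral_innovation_mult_innovation[of j k i H]
        by (auto simp: mult.commute)
    qed auto
    also have "\<dots> \<le> real (card ?S) * (2 * B)\<^sup>2"
      using sum_mono[of ?S _ "\<lambda>_. (2 * B)\<^sup>2", OF cov_le] by simp
    also have "\<dots> \<le> 2 * real k * (2 * B)\<^sup>2"
      using card_close_indices[of n i k] by (intro mult_right_mono) auto
    finally show ?thesis .
  qed
  have "(\<integral>\<omega>. (\<Sum>i<n. ?e i \<omega>)\<^sup>2 \<partial>M) = (\<Sum>i<n. \<Sum>j<n. \<integral>\<omega>. ?e i \<omega> * ?e j \<omega> \<partial>M)"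
    using int by (simp add: power2_eq_square sum_product Bochner_Integration.integral_sum
        Bochner_Integration.integrable_sum)
  also have "\<dots> \<le> (\<Sum>i<n. 2 * real k * (2 * B)\<^sup>2)"
    by (intro sum_mono row)
  finally show ?thesis
    by (simp add: mult_ac)
qed

end

lemma abs_diff_le_of_bounded_increments:
  fixes x :: "nat \<Rightarrow> real"
  assumes inc: "\<And>n. \<bar>x (Suc n) - x n\<bar> \<le> B" and "a \<le> n"
  shows "\<bar>x n - x a\<bar> \<le> B * real (n - a)"
  using \<open>a \<le> n\<close>
proof (induction n rule: dec_induct)
  case base
  then show ?case by simp
next
  case (step n)
  then show ?case
    using inc[of n] by (simp add: Suc_diff_le algebra_simps)
qed

text \<open>Between consecutive squares \<open>r\<^sup>2 \<le> n < (r + 1)\<^sup>2\<close> a sequence with bounded increments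
  moves by \<open>O(r) = o(n)\<close>.\<close>

lemma LIMSEQ_div_of_nat_from_squares:
  fixes x :: "nat \<Rightarrow> real"
  assumes inc: "\<And>n. \<bar>x (Suc n) - x n\<bar> \<le> B"
    and squares: "(\<lambda>r. x (r\<^sup>2) / real (r\<^sup>2)) \<longlonglongrightarrow> 0"
  shows "(\<lambda>n. x n / real n) \<longlonglongrightarrow> 0"
proof (rule LIMSEQ_I)
  fix e :: real
  assume e: "0 < e"
  obtain R0 where R0: "\<And>r. r \<ge> R0 \<Longrightarrow> \<bar>x (r\<^sup>2) / real (r\<^sup>2)\<bar> < e / 2"
    using LIMSEQ_D[OF squares, of "e / 2"] e by auto
  obtain R1 :: nat where R1: "4 * B / e < real R1"
    using reals_Archimedean2 by blast
  show "\<exists>N. \<forall>n\<ge>N. norm (x n / real n - 0) < e"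
  proof (intro exI allI impI)
    fix n
    assume "(max R0 R1 + 1)\<^sup>2 \<le> n"
    moreover define r where "r = floor_sqrt n"
    ultimately have "max R0 R1 + 1 \<le> r"
      by (simp add: le_floor_sqrt_iff)
    then have r: "R0 \<le> r" "R1 < r"
      by auto
    have "r\<^sup>2 \<le> n" "n < (Suc r)\<^sup>2"
      unfolding r_def by (simp_all add: Suc_floor_sqrt_power2_gt)
    then have "n - r\<^sup>2 \<le> 2 * r"
      by (simp add: power2_eq_square)
    then have gap: "real (n - r\<^sup>2) \<le> 2 * real r"
      by linarith
    have rpos: "0 < real r"
      using r by simp
    have "\<bar>x (r\<^sup>2)\<bar> < e / 2 * real (r\<^sup>2)"
      using R0[OF r(1)] rpos by (simp add: abs_divide divide_less_eq)
    moreover have "B * real (n - r\<^sup>2) \<le> e / 2 * real (r\<^sup>2)"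
    proof -
      have "4 * B < real R1 * e"
        using R1 e by (simp add: divide_less_eq)
      also have "\<dots> < real r * e"
        using r(2) e by simp
      finally have "4 * B < real r * e" .
      have "B * (2 * real r) = 4 * B * (real r / 2)"
        by simp
      also have "\<dots> \<le> real r * e * (real r / 2)"
        using \<open>4 * B < real r * e\<close> rpos by (intro mult_right_mono) auto
      also have "\<dots> = e / 2 * real (r\<^sup>2)"
        by (simp add: power2_eq_square)
      finally have "B * (2 * real r) \<le> e / 2 * real (r\<^sup>2)" .
      moreover have "0 \<le> B"
        using inc[of 0] by linarith
      ultimately show ?thesis
        using mult_left_mono[OF gap, of B] by linarith
    qed
    moreover have "\<bar>x n - x (r\<^sup>2)\<bar> \<le> B * real (n - r\<^sup>2)"
      by (rule abs_diff_le_of_bounded_increments[of x B, OF inc \<open>r\<^sup>2 \<le> n\<close>])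
    ultimately have "\<bar>x n\<bar> < e * real (r\<^sup>2)"
      by linarith
    also have "\<dots> \<le> e * real n"
      using e \<open>r\<^sup>2 \<le> n\<close> by simp
    finally have "\<bar>x n\<bar> < e * real n" .
    then show "norm (x n / real n - 0) < e"
      using rpos \<open>r\<^sup>2 \<le> n\<close> e by (simp add: abs_divide divide_less_eq)
  qed
qed

context stream_law
begin

text \<open>Chebyshev and Borel-Cantelli along the squares, using the \<open>O(n)\<close> second moment.\<close>

lemma innovation_sum_squares_AE_eventually:
  assumes bound: "\<And>q v. \<bar>H q v\<bar> \<le> B"
  shows "AE \<omega> in M. eventually
    (\<lambda>r. \<bar>\<Sum>i<r\<^sup>2. innovation H k i \<omega>\<bar> \<le> real (r\<^sup>2) / real (Suc j)) sequentially"
proof -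
  define S where "S n \<omega> = (\<Sum>i<n. innovation H k i \<omega>)" for n \<omega>
  define V where "V = 2 * real k * (2 * B)\<^sup>2"
  define A where "A r = {\<omega> \<in> space M. real (r\<^sup>2) / real (Suc j) < \<bar>S (r\<^sup>2) \<omega>\<bar>}" for r
  have S_bound: "\<bar>S n \<omega>\<bar> \<le> real n * (2 * B)" for n \<omega>
  proof -
    have "\<bar>S n \<omega>\<bar> \<le> (\<Sum>i<n. \<bar>innovation H k i \<omega>\<bar>)"
      unfolding S_def by (rule sum_abs)
    also have "\<dots> \<le> (\<Sum>i<n. 2 * B)"
      by (intro sum_mono innovation_bound bound)
    finally show ?thesis
      by simp
  qed
  have S_square_bound: "(S n \<omega>)\<^sup>2 \<le> (real n * (2 * B))\<^sup>2" for n \<omega>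
    by (metis S_bound abs_ge_zero power2_abs power_mono)
  have [measurable]: "S n \<in> borel_measurable M" for n
    unfolding S_def by measurable
  have A_sets: "A r \<in> sets M" for r
    unfolding A_def by measurable
  have A_measure: "measure M (A r) \<le> V * real (Suc j) ^ 2 * inverse (real r ^ 2)" for r
  proof (cases "r = 0")
    case True
    then show ?thesis
      by (simp add: A_def S_def)
  next
    case False
    define a where "a = real (r\<^sup>2) / real (Suc j)"
    have a: "0 < a"
      using False by (simp add: a_def)
    have "measure M (A r) \<le> measure M {\<omega> \<in> space M. a \<le> \<bar>S (r\<^sup>2) \<omega>\<bar>}"
      by (rule finite_measure_mono) (auto simp: A_def a_def)
    also have "\<dots> \<le> (\<integral>\<omega>. (S (r\<^sup>2) \<omega>)\<^sup>2 \<partial>M) / a\<^sup>2"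
    proof (rule second_moment_method)
      show "integrable M (\<lambda>\<omega>. (S (r\<^sup>2) \<omega>)\<^sup>2)"
        using S_square_bound[of "r\<^sup>2"]
        by (intro integrable_const_bound[where B = "(real (r\<^sup>2) * (2 * B))\<^sup>2"] AE_I2) auto
    qed (simp_all add: a S_def)
    also have "\<dots> \<le> V * real (r\<^sup>2) / a\<^sup>2"
      using integral_innovation_sum_square_le[where H = H and n = "r\<^sup>2" and k = k, OF bound] a
      unfolding S_def V_def by (intro divide_right_mono) (simp_all add: mult_ac)
    also have "\<dots> = V * real (Suc j) ^ 2 * inverse (real r ^ 2)"
      using False by (simp add: a_def field_simps power2_eq_square)
    finally show ?thesis .
  qed
  have "summable (\<lambda>r. measure M (A r))"
  proof (rule summable_comparison_test)
    show "\<exists>N. \<forall>n\<ge>N. norm (measure M (A n)) \<le> V * real (Suc j) ^ 2 * inverse (real n ^ 2)"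
      using A_measure by auto
    show "summable (\<lambda>n. V * real (Suc j) ^ 2 * inverse (real n ^ 2))"
      by (intro summable_mult inverse_power_summable) simp
  qed
  then have "AE \<omega> in M. eventually (\<lambda>r. \<omega> \<in> space M - A r) sequentially"
    by (intro borel_cantelli_AE1 A_sets) (simp_all add: less_top[symmetric])
  then show ?thesis
    by eventually_elim (auto elim!: eventually_mono simp: A_def S_def not_less)
qed

lemma innovation_average_tendsto_zero_AE:
  assumes bound: "\<And>q v. \<bar>H q v\<bar> \<le> B"
  shows "AE \<omega> in M. (\<lambda>n. (\<Sum>i<n. innovation H k i \<omega>) / real n) \<longlonglongrightarrow> 0"
proof -
  have "AE \<omega> in M. \<forall>j. eventually
      (\<lambda>r. \<bar>\<Sum>i<r\<^sup>2. innovation H k i \<omega>\<bar> \<le> real (r\<^sup>2) / real (Suc j)) sequentially"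
    using innovation_sum_squares_AE_eventually[where H = H, OF bound] by (subst AE_all_countable) blast
  then show ?thesis
  proof eventually_elim
    case (elim \<omega>)
    have "(\<lambda>r. (\<Sum>i<r\<^sup>2. innovation H k i \<omega>) / real (r\<^sup>2)) \<longlonglongrightarrow> 0"
    proof (rule LIMSEQ_I)
      fix e :: real
      assume "0 < e"
      then obtain j where j: "inverse (real (Suc j)) < e"
        using reals_Archimedean by blast
      from elim[rule_format, of j] obtain N
        where "\<And>r. r \<ge> N \<Longrightarrow> \<bar>\<Sum>i<r\<^sup>2. innovation H k i \<omega>\<bar> \<le> real (r\<^sup>2) / real (Suc j)"
        by (auto simp: eventually_sequentially)
      then have "\<bar>\<Sum>i<r\<^sup>2. innovation H k i \<omega>\<bar> / real (r\<^sup>2) \<le> inverse (real (Suc j))"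
        if "r \<ge> N" for r
        using that by (cases "r = 0") (simp_all add: divide_le_eq field_simps)
      then have "norm ((\<Sum>i<r\<^sup>2. innovation H k i \<omega>) / real (r\<^sup>2) - 0) < e" if "r \<ge> N" for r
        using that j by (auto simp: abs_divide intro: le_less_trans)
      then show "\<exists>N. \<forall>r\<ge>N. norm ((\<Sum>i<r\<^sup>2. innovation H k i \<omega>) / real (r\<^sup>2) - 0) < e"
        by blast
    qed
    then show ?case
      using innovation_bound[where H = H, OF bound]
      by (intro LIMSEQ_div_of_nat_from_squares[where B = "2 * B"]) simp_all
  qed
qed

end

section \<open>Word frequencies and limits of symbolic derivatives\<close>

definition limit_sym_deriv :: "('q::finite, 'a::finite) pfsa \<Rightarrow> 'a list \<Rightarrow> 'a \<Rightarrow> real" where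
  "limit_sym_deriv G x \<sigma> = stationary_freq G (x @ [\<sigma>]) / (\<Sum>\<tau>\<in>UNIV. stationary_freq G (x @ [\<tau>]))"

lemma ratio_bounds:
  fixes f :: "'a::finite \<Rightarrow> real"
  assumes "\<And>\<tau>. 0 \<le> f \<tau>"
  shows "0 \<le> f \<sigma> / (\<Sum>\<tau>\<in>UNIV. f \<tau>) \<and> f \<sigma> / (\<Sum>\<tau>\<in>UNIV. f \<tau>) \<le> 1"
proof -
  have "f \<sigma> \<le> (\<Sum>\<tau>\<in>UNIV. f \<tau>)"
    using assms by (intro member_le_sum) auto
  then show ?thesis
    using assms[of \<sigma>] by (cases "(\<Sum>\<tau>\<in>UNIV. f \<tau>) = 0") (auto simp: divide_le_eq_1)
qed

lemma sym_deriv_bounds: "0 \<le> sym_deriv s x \<sigma> \<and> sym_deriv s x \<sigma> \<le> 1"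
  unfolding sym_deriv_def by (rule ratio_bounds) simp

lemma limit_sym_deriv_bounds:
  "is_pfsa G \<Longrightarrow> strongly_connected G \<Longrightarrow> 0 \<le> limit_sym_deriv G x \<sigma> \<and> limit_sym_deriv G x \<sigma> \<le> 1"
  unfolding limit_sym_deriv_def by (intro ratio_bounds stationary_freq_nonneg)

lemma unif_bounds: "0 \<le> unif (\<sigma>::'a::finite) \<and> unif \<sigma> \<le> 1"
  by (simp add: unif_def)

lemma limit_sym_deriv_W: "limit_sym_deriv (W :: (unit, 'a::finite) pfsa) = (\<lambda>_. unif)"
  by (simp add: fun_eq_iff limit_sym_deriv_def stationary_freq_W unif_def)

lemma occ_count_stake:
  "occ_count (stake n \<omega>) y = card {i. i + length y \<le> n \<and> stake (length y) (sdrop i \<omega>) = y}"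
proof -
  have "take (length y) (drop i (stake n \<omega>)) = stake (length y) (sdrop i \<omega>)" if "i + length y \<le> n" for i
    using that by (simp add: drop_stake take_stake)
  then show ?thesis
    unfolding occ_count_def by (intro arg_cong[where f = card]) auto
qed

text \<open>Only occurrences overhanging the end of the prefix are missed by \<open>occ_count\<close>.\<close>

lemma occurrence_starts_occ_count_diff:
  assumes "y \<noteq> []"
  shows "\<bar>(\<Sum>i<n. of_bool (stake (length y) (sdrop i \<omega>) = y)) - real (occ_count (stake n \<omega>) y)\<bar>
    \<le> real (length y)"
proof -
  define P where "P i \<longleftrightarrow> stake (length y) (sdrop i \<omega>) = y" for i
  have split: "{..<n} \<inter> {i. P i} =
      {i. i + length y \<le> n \<and> P i} \<union> {i. i < n \<and> n < i + length y \<and> P i}"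
    using assms by (cases y) auto
  have "card ({..<n} \<inter> {i. P i}) =
      card {i. i + length y \<le> n \<and> P i} + card {i. i < n \<and> n < i + length y \<and> P i}"
    unfolding split by (rule card_Un_disjoint) (auto intro: finite_subset[of _ "{..n}"])
  moreover have "card {i. i < n \<and> n < i + length y \<and> P i} \<le> card {n + 1 - length y..<n}"
    by (intro card_mono) auto
  ultimately show ?thesis
    by (simp add: P_def[symmetric] occ_count_stake)
qed

lemma bounded_div_of_nat_tendsto_zero:
  fixes b :: "nat \<Rightarrow> real"
  assumes "\<And>n. \<bar>b n\<bar> \<le> K"
  shows "(\<lambda>n. b n / real n) \<longlonglongrightarrow> 0"
proof (rule Lim_null_comparison[OF _ lim_const_over_n[of K]])
  show "\<forall>\<^sub>F n in sequentially. norm (b n / real n) \<le> K / real n"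
    using assms by (auto intro!: always_eventually divide_right_mono simp: abs_divide)
qed

context stream_law
begin

lemma state_at_Suc: "state_at (Suc i) \<omega> = delta_star G (state_at i \<omega>) (stake 1 (sdrop i \<omega>))"
proof -
  have "stake (Suc i) \<omega> = stake i \<omega> @ stake 1 (sdrop i \<omega>)"
    using stake_add[of i \<omega> 1] by simp
  then show ?thesis
    by (simp only: state_at_def delta_star_append)
qed

lemma expect_word_occurrence: "expect_word (\<lambda>_ v. of_bool (v = y)) (length y) q = word_prob G q y"
  unfolding expect_word_def by (subst sum.remove[of _ y]) auto

lemma expect_word_next_state: "expect_word (\<lambda>q v. g (delta_star G q v)) 1 q = trans_op G g q"
  using sum_lists_length_Suc[of "\<lambda>v. word_prob G q v * g (delta_star G q v)" 0]
  by (simp add: expect_word_def trans_op_def)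

lemma occurrence_starts_decomposition:
  assumes sol: "\<And>q. word_prob G q y = g q - trans_op G g q + c"
  shows "(\<Sum>i<n. of_bool (stake (length y) (sdrop i \<omega>) = y)) =
      (\<Sum>i<n. innovation (\<lambda>_ v. of_bool (v = y)) (length y) i \<omega>)
    + (\<Sum>i<n. innovation (\<lambda>q v. g (delta_star G q v)) 1 i \<omega>)
    + (g (state_at 0 \<omega>) - g (state_at n \<omega>)) + real n * c"
proof -
  let ?s = "\<lambda>i. state_at i \<omega>"
  have "(\<Sum>i<n. innovation (\<lambda>q v. g (delta_star G q v)) 1 i \<omega>) =
      (\<Sum>i<n. g (?s (Suc i)) - g (?s i)) + (\<Sum>i<n. word_prob G (?s i) y - c)"
    unfolding innovation_def expect_word_next_state state_at_Suc[symmetric]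
    by (simp add: sol sum.distrib[symmetric])
  also have "\<dots> = g (?s n) - g (?s 0) + (\<Sum>i<n. word_prob G (?s i) y) - real n * c"
    by (subst sum_lessThan_telescope) (simp add: sum_subtractf)
  finally show ?thesis
    by (simp add: innovation_def expect_word_occurrence sum_subtractf)
qed

lemma occ_count_frequency_tendsto_AE:
  assumes "y \<noteq> []" and sol: "\<And>q. word_prob G q y = g q - trans_op G g q + c"
  shows "AE \<omega> in M. (\<lambda>n. real (occ_count (stake n \<omega>) y) / real n) \<longlonglongrightarrow> c"
proof -
  define Bg where "Bg = Max (range (\<lambda>q. \<bar>g q\<bar>))"
  have g_bound: "\<bar>g q\<bar> \<le> Bg" for q
    unfolding Bg_def by (rule Max_ge) auto
  have "AE \<omega> in M. (\<lambda>n. (\<Sum>i<n. innovation (\<lambda>_ v. of_bool (v = y)) (length y) i \<omega>) / real n)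
      \<longlonglongrightarrow> 0"
    by (rule innovation_average_tendsto_zero_AE[where B = 1]) simp
  moreover have "AE \<omega> in M. (\<lambda>n. (\<Sum>i<n. innovation (\<lambda>q v. g (delta_star G q v)) 1 i \<omega>) / real n)
      \<longlonglongrightarrow> 0"
    by (rule innovation_average_tendsto_zero_AE[where B = Bg]) (rule g_bound)
  ultimately show ?thesis
  proof eventually_elim
    case (elim \<omega>)
    let ?starts = "\<lambda>n. \<Sum>i<n. of_bool (stake (length y) (sdrop i \<omega>) = y) :: real"
    have "\<bar>g (state_at 0 \<omega>) - g (state_at n \<omega>)\<bar> \<le> 2 * Bg" for n
      using g_bound[of "state_at 0 \<omega>"] g_bound[of "state_at n \<omega>"] by linarith
    then have "(\<lambda>n. (g (state_at 0 \<omega>) - g (state_at n \<omega>)) / real n) \<longlonglongrightarrow> 0"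
      by (rule bounded_div_of_nat_tendsto_zero)
    moreover have "(\<lambda>n. (?starts n - real (occ_count (stake n \<omega>) y)) / real n) \<longlonglongrightarrow> 0"
      using occurrence_starts_occ_count_diff[OF \<open>y \<noteq> []\<close>]
      by (intro bounded_div_of_nat_tendsto_zero)
    moreover have "(\<lambda>n. real n * c / real n) \<longlonglongrightarrow> c"
      by (rule Lim_transform_eventually[OF tendsto_const])
        (use eventually_gt_at_top[of "0 :: nat"] in \<open>eventually_elim, simp\<close>)
    ultimately have "(\<lambda>n. (\<Sum>i<n. innovation (\<lambda>_ v. of_bool (v = y)) (length y) i \<omega>) / real n
        + (\<Sum>i<n. innovation (\<lambda>q v. g (delta_star G q v)) 1 i \<omega>) / real n
        + (g (state_at 0 \<omega>) - g (state_at n \<omega>)) / real n + real n * c / real n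
        - (?starts n - real (occ_count (stake n \<omega>) y)) / real n) \<longlonglongrightarrow> 0 + 0 + 0 + c - 0"
      using elim by (intro tendsto_intros)
    then show ?case
      by (simp add: occurrence_starts_decomposition[OF sol] add_divide_distrib diff_divide_distrib)
  qed
qed

end

locale sc_stream_law = stream_law +
  assumes sc: "strongly_connected G"
begin

lemma stationary_freq_tendsto_AE:
  assumes "y \<noteq> []"
  shows "AE \<omega> in M. (\<lambda>n. real (occ_count (stake n \<omega>) y) / real n) \<longlonglongrightarrow> stationary_freq G y"
proof -
  obtain g where "\<And>q. word_prob G q y = g q - trans_op G g q + stationary_freq G y"
    using stationary_freq_poisson[OF pfsa sc] by blast
  from occ_count_frequency_tendsto_AE[OF assms this] show ?thesis .
qed

lemma AE_no_occurrence_if_stationary_freq_zero: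
  assumes "stationary_freq G y = 0"
  shows "AE \<omega> in M. \<forall>n. occ_count (stake n \<omega>) y = 0"
proof -
  obtain g where sol: "\<And>q. word_prob G q y = g q - trans_op G g q"
    using stationary_freq_poisson[OF pfsa sc, of y] assms by auto
  have "trans_op G g q \<le> g q" for q
    using sol[of q] word_prob_nonneg[OF pfsa, of q y] by linarith
  then have const: "g q = g q'" for q q'
    by (rule superharmonic_const[OF pfsa sc])
  have "trans_op G g q = g q" for q
  proof -
    have "trans_op G g q = trans_op G (\<lambda>_. g q) q"
      unfolding trans_op_def using const[of _ q] by (intro sum.cong) auto
    then show ?thesis
      by (simp add: trans_op_const[OF pfsa])
  qed
  then have "word_prob G q y = 0" for q
    by (simp add: sol)
  from AE_not_occurs_if_word_prob_zero[OF this] show ?thesis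
    by eventually_elim (simp add: occ_count_stake)
qed

lemma sym_deriv_tendsto_AE:
  "AE \<omega> in M. \<forall>x \<sigma>. (\<lambda>n. sym_deriv (stake n \<omega>) x \<sigma>) \<longlonglongrightarrow> limit_sym_deriv G x \<sigma>"
proof -
  have "AE \<omega> in M. \<forall>\<sigma>. (\<lambda>n. sym_deriv (stake n \<omega>) x \<sigma>) \<longlonglongrightarrow> limit_sym_deriv G x \<sigma>" for x
  proof (cases "(\<Sum>\<tau>\<in>UNIV. stationary_freq G (x @ [\<tau>])) = 0")
    case True
    then have zero: "stationary_freq G (x @ [\<tau>]) = 0" for \<tau>
      using stationary_freq_nonneg[OF pfsa sc] by (simp add: sum_nonneg_eq_0_iff)
    have "AE \<omega> in M. \<forall>\<tau> n. occ_count (stake n \<omega>) (x @ [\<tau>]) = 0"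
      using AE_no_occurrence_if_stationary_freq_zero[OF zero] by (subst AE_all_countable) blast
    then show ?thesis
      by eventually_elim (simp add: sym_deriv_def limit_sym_deriv_def zero)
  next
    case False
    have "AE \<omega> in M. \<forall>\<tau>. (\<lambda>n. real (occ_count (stake n \<omega>) (x @ [\<tau>])) / real n)
        \<longlonglongrightarrow> stationary_freq G (x @ [\<tau>])"
      by (subst AE_all_countable) (simp add: stationary_freq_tendsto_AE)
    then show ?thesis
    proof eventually_elim
      case (elim \<omega>)
      show ?case
      proof
        fix \<sigma>
        have "(\<lambda>n. (real (occ_count (stake n \<omega>) (x @ [\<sigma>])) / real n) /
            (\<Sum>\<tau>\<in>UNIV. real (occ_count (stake n \<omega>) (x @ [\<tau>])) / real n)) \<longlonglongrightarrow> limit_sym_deriv G x \<sigma>"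
          unfolding limit_sym_deriv_def using elim False by (intro tendsto_intros) auto
        moreover have "\<forall>\<^sub>F n in sequentially.
            (real (occ_count (stake n \<omega>) (x @ [\<sigma>])) / real n) /
            (\<Sum>\<tau>\<in>UNIV. real (occ_count (stake n \<omega>) (x @ [\<tau>])) / real n) = sym_deriv (stake n \<omega>) x \<sigma>"
          using eventually_gt_at_top[of "0 :: nat"]
          by eventually_elim (simp add: sym_deriv_def sum_divide_distrib[symmetric])
        ultimately show "(\<lambda>n. sym_deriv (stake n \<omega>) x \<sigma>) \<longlonglongrightarrow> limit_sym_deriv G x \<sigma>"
          by (rule Lim_transform_eventually)
      qed
    qed
  qed
  then show ?thesis
    by (subst AE_all_countable) blast
qed

end

section \<open>The weighted distance of derivative families\<close>

lemma sup_norm_le: "(\<And>\<sigma>. \<bar>f \<sigma>\<bar> \<le> B) \<Longrightarrow> sup_norm (f :: 'a::finite \<Rightarrow> real) \<le> B"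
  unfolding sup_norm_def by (subst Max_le_iff) auto

lemma abs_le_sup_norm: "\<bar>f \<sigma>\<bar> \<le> sup_norm (f :: 'a::finite \<Rightarrow> real)"
  unfolding sup_norm_def by (rule Max_ge) auto

lemma sup_norm_nonneg: "0 \<le> sup_norm (f :: 'a::finite \<Rightarrow> real)"
  using abs_le_sup_norm[of f undefined] by linarith

lemma abs_sup_norm_diff_le: "\<bar>sup_norm f - sup_norm g\<bar> \<le> (\<Sum>\<sigma>\<in>UNIV. \<bar>f \<sigma> - g \<sigma>\<bar>)"
  for f g :: "'a::finite \<Rightarrow> real"
proof -
  have *: "sup_norm f \<le> sup_norm g + (\<Sum>\<sigma>\<in>UNIV. \<bar>f \<sigma> - g \<sigma>\<bar>)" for f g :: "'a \<Rightarrow> real"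
  proof (rule sup_norm_le)
    fix \<sigma>
    have "\<bar>f \<sigma> - g \<sigma>\<bar> \<le> (\<Sum>\<sigma>\<in>UNIV. \<bar>f \<sigma> - g \<sigma>\<bar>)"
      by (rule member_le_sum) auto
    then show "\<bar>f \<sigma>\<bar> \<le> sup_norm g + (\<Sum>\<sigma>\<in>UNIV. \<bar>f \<sigma> - g \<sigma>\<bar>)"
      using abs_le_sup_norm[of g \<sigma>] by linarith
  qed
  have "(\<Sum>\<sigma>\<in>UNIV. \<bar>g \<sigma> - f \<sigma>\<bar>) = (\<Sum>\<sigma>\<in>UNIV. \<bar>f \<sigma> - g \<sigma>\<bar>)"
    by (simp add: abs_minus_commute)
  then show ?thesis
    using *[of f g] *[of g f] by linarith
qed

lemma tendsto_sup_norm: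
  fixes f :: "'i \<Rightarrow> 'a::finite \<Rightarrow> real"
  assumes "\<And>\<sigma>. ((\<lambda>i. f i \<sigma>) \<longlongrightarrow> l \<sigma>) F"
  shows "((\<lambda>i. sup_norm (f i)) \<longlongrightarrow> sup_norm l) F"
proof -
  have "((\<lambda>i. \<Sum>\<sigma>\<in>UNIV. \<bar>f i \<sigma> - l \<sigma>\<bar>) \<longlongrightarrow> (\<Sum>\<sigma>\<in>UNIV. \<bar>l \<sigma> - l \<sigma>\<bar>)) F"
    by (intro tendsto_intros assms)
  then have "((\<lambda>i. \<Sum>\<sigma>\<in>UNIV. \<bar>f i \<sigma> - l \<sigma>\<bar>) \<longlongrightarrow> 0) F"
    by simp
  then have "((\<lambda>i. sup_norm (f i) - sup_norm l) \<longlongrightarrow> 0) F"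
  proof (rule Lim_null_comparison[rotated])
    show "\<forall>\<^sub>F i in F. norm (sup_norm (f i) - sup_norm l) \<le> (\<Sum>\<sigma>\<in>UNIV. \<bar>f i \<sigma> - l \<sigma>\<bar>)"
      by (intro always_eventually allI) (simp add: abs_sup_norm_diff_le)
  qed
  then show ?thesis
    by (simp add: Lim_null[symmetric])
qed

lemma sup_norm_diff_le_1:
  assumes "\<And>\<sigma>. 0 \<le> f \<sigma> \<and> f \<sigma> \<le> 1" "\<And>\<sigma>. 0 \<le> g \<sigma> \<and> g \<sigma> \<le> 1"
  shows "sup_norm (\<lambda>\<sigma>::'a::finite. f \<sigma> - g \<sigma>) \<le> 1"
proof (rule sup_norm_le)
  show "\<bar>f \<sigma> - g \<sigma>\<bar> \<le> 1" for \<sigma>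
    using assms(1)[of \<sigma>] assms(2)[of \<sigma>] by linarith
qed

definition word_weight :: "'a::finite list \<Rightarrow> real" where
  "word_weight x = 1 / real CARD('a) ^ (2 * length x)"

lemma word_weight_nonneg: "0 \<le> word_weight x"
  by (simp add: word_weight_def)

lemma sum_word_weight_length:
  "(\<Sum>x | length x = k. word_weight (x :: 'a::finite list)) = (1 / real CARD('a)) ^ k"
proof -
  have "(\<Sum>x | length x = k. word_weight (x :: 'a list)) = real CARD('a) ^ k / real CARD('a) ^ (2 * k)"
    using card_lists_length_eq[of "UNIV :: 'a set" k] by (simp add: word_weight_def)
  also have "\<dots> = (1 / real CARD('a)) ^ k"
    unfolding mult_2 power_add power_one_over by simp
  finally show ?thesis .
qed

lemma sum_word_weight_le:
  fixes F :: "'a::finite list set"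
  assumes card: "2 \<le> CARD('a)" and "finite F" and long: "\<And>x. x \<in> F \<Longrightarrow> K \<le> length x"
  shows "(\<Sum>x\<in>F. word_weight x) \<le> (1 / real CARD('a)) ^ K * (real CARD('a) / (real CARD('a) - 1))"
proof -
  define N where "N = real CARD('a)"
  have N: "2 \<le> N"
    using card by (simp add: N_def)
  define L where "L = Max (insert K (length ` F))"
  have "K \<le> L" "\<And>x. x \<in> F \<Longrightarrow> length x \<le> L"
    unfolding L_def using \<open>finite F\<close> by auto
  then have sub: "F \<subseteq> (\<Union>k\<in>{K..L}. {x :: 'a list. length x = k})"
    using long by auto
  have "(\<Sum>x\<in>F. word_weight x) \<le> (\<Sum>x\<in>(\<Union>k\<in>{K..L}. {x :: 'a list. length x = k}). word_weight x)"
    by (rule sum_mono2[OF _ sub]) (simp_all add: word_weight_nonneg)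
  also have "\<dots> = (\<Sum>k\<in>{K..L}. \<Sum>x | length (x :: 'a list) = k. word_weight x)"
    by (rule sum.UNION_disjoint) auto
  also have "\<dots> = (\<Sum>k\<in>{K..L}. (1 / N) ^ k)"
    by (simp add: sum_word_weight_length N_def)
  also have "\<dots> = ((1 / N) ^ K - (1 / N) ^ Suc L) / (1 - 1 / N)"
    using \<open>K \<le> L\<close> N by (simp add: sum_gp)
  also have "\<dots> \<le> (1 / N) ^ K / (1 - 1 / N)"
    using N by (intro divide_right_mono) auto
  also have "\<dots> = (1 / N) ^ K * (N / (N - 1))"
    using N by (simp add: field_simps)
  finally show ?thesis
    by (simp add: N_def)
qed

lemma word_weight_summable: "2 \<le> CARD('a) \<Longrightarrow> (word_weight :: 'a::finite list \<Rightarrow> real) summable_on A"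
  using sum_word_weight_le[where K = 0]
  by (intro nonneg_bdd_above_summable_on bdd_aboveI word_weight_nonneg) auto

lemma infsum_tendsto_zero_dominated:
  fixes h :: "'i \<Rightarrow> 'x \<Rightarrow> real"
  assumes bound: "\<And>i x. \<bar>h i x\<bar> \<le> b x" and b: "b summable_on UNIV"
    and lim: "\<And>x. ((\<lambda>i. h i x) \<longlongrightarrow> 0) F"
  shows "((\<lambda>i. infsum (h i) UNIV) \<longlongrightarrow> 0) F"
proof (rule tendstoI)
  fix e :: real
  assume e: "0 < e"
  have "\<forall>\<^sub>F S in finite_subsets_at_top UNIV. dist (sum b S) (infsum b UNIV) < e / 2"
    using infsum_tendsto[OF b] e unfolding tendsto_iff by (metis half_gt_zero)
  then obtain S where S: "finite S" "dist (sum b S) (infsum b UNIV) < e / 2"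
    unfolding eventually_finite_subsets_at_top by auto
  have b_rest: "b summable_on (UNIV - S)"
    by (rule summable_on_subset_banach[OF b]) auto
  have "infsum b UNIV = infsum b (S \<union> (UNIV - S))"
    by simp
  also have "\<dots> = infsum b S + infsum b (UNIV - S)"
    by (rule infsum_Un_disjoint) (use S b_rest in auto)
  finally have tail: "infsum b (UNIV - S) < e / 2"
    using S by (simp add: dist_real_def)
  have norm_h: "(\<lambda>x. norm (h i x)) summable_on UNIV" for i
    by (rule Infinite_Sum.abs_summable_on_comparison_test'[OF b]) (use bound in auto)
  have h: "h i summable_on A" for i A
    using summable_on_iff_abs_summable_on_real[THEN iffD2, OF norm_h]
    by (rule summable_on_subset_banach) auto
  have abs_h: "(\<lambda>x. \<bar>h i x\<bar>) summable_on A" for i A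
    using norm_h unfolding real_norm_def by (rule summable_on_subset_banach) auto
  have "((\<lambda>i. \<Sum>x\<in>S. \<bar>h i x\<bar>) \<longlongrightarrow> (\<Sum>x\<in>S. \<bar>0\<bar>)) F"
    by (intro tendsto_intros lim)
  then have "\<forall>\<^sub>F i in F. (\<Sum>x\<in>S. \<bar>h i x\<bar>) < e / 2"
    using e unfolding order_tendsto_iff by (simp del: divide_const_simps)
  then show "\<forall>\<^sub>F i in F. dist (infsum (h i) UNIV) 0 < e"
  proof eventually_elim
    case (elim i)
    have "infsum (h i) UNIV = infsum (h i) (S \<union> (UNIV - S))"
      by simp
    also have "\<dots> = sum (h i) S + infsum (h i) (UNIV - S)"
      using S(1) by (subst infsum_Un_disjoint) (use h in auto)
    finally have split: "infsum (h i) UNIV = sum (h i) S + infsum (h i) (UNIV - S)" .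
    have "\<bar>sum (h i) S\<bar> \<le> (\<Sum>x\<in>S. \<bar>h i x\<bar>)"
      by (rule sum_abs)
    moreover have "\<bar>infsum (h i) (UNIV - S)\<bar> \<le> infsum (\<lambda>x. \<bar>h i x\<bar>) (UNIV - S)"
      using norm_infsum_bound[of "h i" "UNIV - S"] abs_h[of i "UNIV - S"] by simp
    moreover have "\<dots> \<le> infsum b (UNIV - S)"
      by (rule infsum_mono[OF abs_h b_rest]) (use bound in auto)
    ultimately show ?case
      using elim tail unfolding dist_real_def split by linarith
  qed
qed

lemma infsum_tendsto_dominated:
  fixes h :: "'i \<Rightarrow> 'x \<Rightarrow> real"
  assumes bound: "\<And>i x. \<bar>h i x\<bar> \<le> b x" "\<And>x. \<bar>l x\<bar> \<le> b x" and b: "b summable_on UNIV"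
    and lim: "\<And>x. ((\<lambda>i. h i x) \<longlongrightarrow> l x) F"
  shows "((\<lambda>i. infsum (h i) UNIV) \<longlongrightarrow> infsum l UNIV) F"
proof -
  have summable: "f summable_on UNIV" if "\<And>x. \<bar>f x\<bar> \<le> b x" for f :: "'x \<Rightarrow> real"
  proof -
    have "(\<lambda>x. norm (f x)) summable_on UNIV"
      by (rule Infinite_Sum.abs_summable_on_comparison_test'[OF b]) (use that in auto)
    then show ?thesis
      by (rule summable_on_iff_abs_summable_on_real[THEN iffD2])
  qed
  have "((\<lambda>i. infsum (\<lambda>x. h i x - l x) UNIV) \<longlongrightarrow> 0) F"
  proof (rule infsum_tendsto_zero_dominated)
    show "\<bar>h i x - l x\<bar> \<le> 2 * b x" for i x
      using bound(1)[of i x] bound(2)[of x] by linarith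
    show "(\<lambda>x. 2 * b x) summable_on UNIV"
      using b by (rule summable_on_cmult_right)
    show "((\<lambda>i. h i x - l x) \<longlongrightarrow> 0) F" for x
      using lim[of x] by (simp add: Lim_null[symmetric])
  qed
  moreover have "infsum (\<lambda>x. h i x - l x) UNIV = infsum (h i) UNIV - infsum l UNIV" for i
  proof -
    have "h i summable_on UNIV" "(\<lambda>x. - l x) summable_on UNIV"
      using bound by (auto intro: summable)
    then have "infsum (\<lambda>x. h i x + - l x) UNIV = infsum (h i) UNIV + infsum (\<lambda>x. - l x) UNIV"
      by (rule infsum_add)
    then show ?thesis
      by (simp add: infsum_uminus)
  qed
  ultimately show ?thesis
    by (simp add: Lim_null[symmetric])
qed

definition deriv_distance :: "('a::finite list \<Rightarrow> 'a \<Rightarrow> real) \<Rightarrow> ('a list \<Rightarrow> 'a \<Rightarrow> real) \<Rightarrow> real" where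
  "deriv_distance \<phi> \<psi> = (real CARD('a) - 1) / real CARD('a) *
     infsum (\<lambda>x. sup_norm (\<lambda>\<sigma>. \<phi> x \<sigma> - \<psi> x \<sigma>) / real CARD('a) ^ (2 * length x)) UNIV"

definition deriv_distance_upto ::
    "('a::finite list \<Rightarrow> 'a \<Rightarrow> real) \<Rightarrow> ('a list \<Rightarrow> 'a \<Rightarrow> real) \<Rightarrow> real \<Rightarrow> real" where
  "deriv_distance_upto \<phi> \<psi> l = (real CARD('a) - 1) / real CARD('a) *
     (\<Sum>x\<in>{x :: 'a list. real (length x) \<le> l}.
        sup_norm (\<lambda>\<sigma>. \<phi> x \<sigma> - \<psi> x \<sigma>) / real CARD('a) ^ (2 * length x))"

lemma theta_sum_eq_deriv_distance: "theta_sum s1 s2 = deriv_distance (sym_deriv s1) (sym_deriv s2)"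
  by (simp add: theta_sum_def deriv_distance_def)

lemma zeta_hat_eq_deriv_distance_upto: "zeta_hat s l = deriv_distance_upto (sym_deriv s) (\<lambda>_. unif) l"
  by (simp add: zeta_hat_def deriv_distance_upto_def)

lemma weighted_sup_norm_bounds:
  fixes x :: "'a::finite list"
  assumes "\<And>\<sigma>. 0 \<le> f \<sigma> \<and> f \<sigma> \<le> 1" "\<And>\<sigma>. 0 \<le> g \<sigma> \<and> g \<sigma> \<le> 1"
  shows "\<bar>sup_norm (\<lambda>\<sigma>::'a::finite. f \<sigma> - g \<sigma>) / real CARD('a) ^ (2 * length x)\<bar> \<le> word_weight x"
  using sup_norm_diff_le_1[of f g, OF assms] sup_norm_nonneg[of "\<lambda>\<sigma>. f \<sigma> - g \<sigma>"]
  by (simp add: word_weight_def divide_right_mono)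

lemma deriv_distance_tendsto:
  fixes \<phi>s \<psi>s :: "'i \<Rightarrow> 'a::finite list \<Rightarrow> 'a \<Rightarrow> real"
  assumes "\<And>x \<sigma>. ((\<lambda>i. \<phi>s i x \<sigma>) \<longlongrightarrow> \<phi> x \<sigma>) F" "\<And>x \<sigma>. ((\<lambda>i. \<psi>s i x \<sigma>) \<longlongrightarrow> \<psi> x \<sigma>) F"
    and "\<And>i x \<sigma>. 0 \<le> \<phi>s i x \<sigma> \<and> \<phi>s i x \<sigma> \<le> 1" "\<And>i x \<sigma>. 0 \<le> \<psi>s i x \<sigma> \<and> \<psi>s i x \<sigma> \<le> 1"
    and "\<And>x \<sigma>. 0 \<le> \<phi> x \<sigma> \<and> \<phi> x \<sigma> \<le> 1" "\<And>x \<sigma>. 0 \<le> \<psi> x \<sigma> \<and> \<psi> x \<sigma> \<le> 1"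
  shows "((\<lambda>i. deriv_distance (\<phi>s i) (\<psi>s i)) \<longlongrightarrow> deriv_distance \<phi> \<psi>) F"
proof (cases "CARD('a) = 1")
  case True
  then show ?thesis
    by (simp add: deriv_distance_def)
next
  case False
  then have "2 \<le> CARD('a)"
    using zero_less_card_finite[where 'a = 'a] by linarith
  have "((\<lambda>i. infsum (\<lambda>x. sup_norm (\<lambda>\<sigma>. \<phi>s i x \<sigma> - \<psi>s i x \<sigma>) / real CARD('a) ^ (2 * length x)) UNIV)
      \<longlongrightarrow> infsum (\<lambda>x. sup_norm (\<lambda>\<sigma>. \<phi> x \<sigma> - \<psi> x \<sigma>) / real CARD('a) ^ (2 * length x)) UNIV) F"
    using assms
    by (intro infsum_tendsto_dominated[OF _ _ word_weight_summable[OF \<open>2 \<le> CARD('a)\<close>]]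
        weighted_sup_norm_bounds tendsto_intros tendsto_sup_norm) auto
  then show ?thesis
    unfolding deriv_distance_def by (intro tendsto_intros)
qed

lemma deriv_distance_upto_tendsto:
  assumes "\<And>x \<sigma>. ((\<lambda>i. \<phi>s i x \<sigma>) \<longlongrightarrow> \<phi> x \<sigma>) F"
  shows "((\<lambda>i. deriv_distance_upto (\<phi>s i) \<psi> l) \<longlongrightarrow> deriv_distance_upto \<phi> \<psi> l) F"
  unfolding deriv_distance_upto_def using assms by (intro tendsto_intros tendsto_sup_norm) auto

lemma finite_lists_length_le_real: "finite {x :: 'a::finite list. real (length x) \<le> l}"
proof (rule finite_subset)
  show "{x :: 'a list. real (length x) \<le> l} \<subseteq> {x. set x \<subseteq> UNIV \<and> length x \<le> nat \<lceil>l\<rceil>}"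
    by auto linarith
qed (rule finite_lists_length_le, simp)

lemma infsum_tail_le:
  assumes card: "2 \<le> CARD('a)" and t: "\<And>x. 0 \<le> t x \<and> t x \<le> word_weight x"
  shows "infsum t {x :: 'a::finite list. K \<le> length x}
    \<le> (1 / real CARD('a)) ^ K * (real CARD('a) / (real CARD('a) - 1))"
proof (rule infsum_le_finite_sums)
  show "t summable_on {x. K \<le> length x}"
    by (rule summable_on_comparison_test[OF word_weight_summable[OF card]]) (use t in auto)
  fix F :: "'a list set"
  assume "finite F" "F \<subseteq> {x. K \<le> length x}"
  then have "sum t F \<le> sum word_weight F"
    using t by (intro sum_mono) auto
  also have "\<dots> \<le> (1 / real CARD('a)) ^ K * (real CARD('a) / (real CARD('a) - 1))"
    using \<open>F \<subseteq> _\<close> by (intro sum_word_weight_le[OF card \<open>finite F\<close>]) auto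
  finally show "sum t F \<le> (1 / real CARD('a)) ^ K * (real CARD('a) / (real CARD('a) - 1))" .
qed

text \<open>For a one-letter alphabet the length bound is \<open>ln (1 / \<epsilon>) / 0 = 0\<close>, and both sides vanish
  because of the factor \<open>(|\<Sigma>| - 1) / |\<Sigma>|\<close>.\<close>

lemma deriv_distance_upto_approx:
  fixes \<phi> \<psi> :: "'a::finite list \<Rightarrow> 'a \<Rightarrow> real"
  assumes "\<And>x \<sigma>. 0 \<le> \<phi> x \<sigma> \<and> \<phi> x \<sigma> \<le> 1" "\<And>x \<sigma>. 0 \<le> \<psi> x \<sigma> \<and> \<psi> x \<sigma> \<le> 1" and "0 < \<epsilon>"
  shows "\<bar>deriv_distance \<phi> \<psi> - deriv_distance_upto \<phi> \<psi> (ln (1 / \<epsilon>) / ln (real CARD('a)))\<bar> \<le> \<epsilon>"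
proof (cases "CARD('a) = 1")
  case True
  then show ?thesis
    using \<open>0 < \<epsilon>\<close> by (simp add: deriv_distance_def deriv_distance_upto_def)
next
  case False
  then have card: "2 \<le> CARD('a)"
    using zero_less_card_finite[where 'a = 'a] by linarith
  define N where "N = real CARD('a)"
  define l where "l = ln (1 / \<epsilon>) / ln N"
  define K where "K = nat (\<lfloor>l\<rfloor> + 1)"
  define S where "S = {x :: 'a list. real (length x) \<le> l}"
  define t where "t x = sup_norm (\<lambda>\<sigma>. \<phi> x \<sigma> - \<psi> x \<sigma>) / N ^ (2 * length x)" for x
  have N: "2 \<le> N"
    using card by (simp add: N_def)
  have t: "0 \<le> t x \<and> t x \<le> word_weight x" for x
  proof -
    have "\<bar>t x\<bar> \<le> word_weight x"
      using weighted_sup_norm_bounds[of "\<phi> x" "\<psi> x" x] assms(1,2) by (simp add: t_def N_def)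
    moreover have "0 \<le> t x"
      by (simp add: t_def sup_norm_nonneg)
    ultimately show ?thesis
      by simp
  qed
  have "finite S"
    unfolding S_def by (rule finite_lists_length_le_real)
  have "UNIV - S = {x. K \<le> length x}"
    by (auto simp: S_def K_def) linarith+
  have "t summable_on UNIV - S"
    by (rule summable_on_comparison_test[OF word_weight_summable[OF card]]) (use t in auto)
  then have "infsum t UNIV = sum t S + infsum t (UNIV - S)"
    using infsum_Un_disjoint[of t S "UNIV - S"] \<open>finite S\<close> by (simp add: Un_Diff_cancel)
  then have "(N - 1) / N * infsum t UNIV - (N - 1) / N * sum t S = (N - 1) / N * infsum t (UNIV - S)"
    by (simp add: algebra_simps)
  moreover have "0 \<le> (N - 1) / N * infsum t (UNIV - S)"
    using t N by (intro mult_nonneg_nonneg infsum_nonneg) auto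
  moreover have "(N - 1) / N * infsum t (UNIV - S) \<le> (N - 1) / N * ((1 / N) ^ K * (N / (N - 1)))"
    unfolding \<open>UNIV - S = _\<close> N_def using infsum_tail_le[OF card t] N
    by (intro mult_left_mono) (auto simp: N_def)
  moreover have "(N - 1) / N * ((1 / N) ^ K * (N / (N - 1))) = (1 / N) ^ K"
    using N by (simp add: field_simps)
  moreover have "(1 / N) ^ K < \<epsilon>"
  proof -
    have "N powr l = 1 / \<epsilon>"
      using N \<open>0 < \<epsilon>\<close> by (simp add: powr_def l_def)
    moreover have "l < real K"
      unfolding K_def by linarith
    then have "N powr l < N powr real K"
      using N by (intro powr_less_mono) auto
    ultimately have "1 / \<epsilon> < N ^ K"
      using N by (simp add: powr_realpow)
    then show ?thesis
      using \<open>0 < \<epsilon>\<close> N by (simp add: power_one_over field_simps)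
  qed
  ultimately have "\<bar>(N - 1) / N * infsum t UNIV - (N - 1) / N * sum t S\<bar> \<le> \<epsilon>"
    by linarith
  moreover have "deriv_distance \<phi> \<psi> = (N - 1) / N * infsum t UNIV"
    by (auto simp: deriv_distance_def t_def N_def intro!: infsum_cong)
  ultimately show ?thesis
    by (simp add: deriv_distance_upto_def t_def S_def l_def N_def)
qed

section \<open>The distance \<open>\<Theta>\<close> between strongly connected PFSAs\<close>

definition uniform_stream :: "'a::finite stream measure" where
  "uniform_stream = stream_space (measure_pmf (pmf_of_set UNIV))"

lemma prob_space_uniform_stream: "prob_space (uniform_stream :: 'a::finite stream measure)"
  unfolding uniform_stream_def by (rule prob_space.prob_space_stream_space) (rule prob_space_measure_pmf)

lemma sets_uniform_stream: "sets uniform_stream = sets (stream_space (count_space UNIV))"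
  unfolding uniform_stream_def by (rule sets_stream_space_cong[OF sets_measure_pmf_count_space])

lemma emeasure_uniform_stream_cylinder:
  "emeasure (uniform_stream :: 'a::finite stream measure) {\<omega> \<in> space uniform_stream. stake (length w) \<omega> = w}
     = ennreal ((1 / real CARD('a)) ^ length w)"
proof (induction w)
  case Nil
  interpret prob_space "uniform_stream :: 'a stream measure"
    by (rule prob_space_uniform_stream)
  show ?case
    by (simp add: emeasure_space_1)
next
  case (Cons a w)
  let ?p = "pmf_of_set (UNIV :: 'a set)"
  have space: "space (uniform_stream :: 'a stream measure) = UNIV"
    by (simp add: uniform_stream_def space_stream_space)
  have "stake n \<in> measurable (uniform_stream :: 'a stream measure) (count_space UNIV)" for n
    using measurable_stake[of n] by (subst measurable_cong_sets[OF sets_uniform_stream refl])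
  then have cylinder: "{\<omega> \<in> space uniform_stream. stake n \<omega> = v} \<in> sets (uniform_stream :: 'a stream measure)"
    for n v
    by measurable
  have "emeasure uniform_stream {\<omega> \<in> space uniform_stream. stake (length (a # w)) \<omega> = a # w}
      = (\<integral>\<^sup>+t. emeasure uniform_stream
          {x \<in> space uniform_stream. t ## x \<in> {\<omega> \<in> space uniform_stream. stake (length (a # w)) \<omega> = a # w}}
        \<partial>measure_pmf ?p)"
    unfolding uniform_stream_def
    by (rule prob_space.emeasure_stream_space[OF prob_space_measure_pmf])
      (use cylinder in \<open>simp add: uniform_stream_def\<close>)
  also have "\<dots> = (\<integral>\<^sup>+t. emeasure uniform_stream {\<omega> \<in> space uniform_stream. stake (length w) \<omega> = w}
      * indicator {a} t \<partial>measure_pmf ?p)"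
    by (intro nn_integral_cong) (auto simp: space indicator_def)
  also have "\<dots> = emeasure uniform_stream {\<omega> \<in> space uniform_stream. stake (length w) \<omega> = w}
      * emeasure (measure_pmf ?p) {a}"
    by (rule nn_integral_cmult_indicator) simp
  also have "\<dots> = ennreal ((1 / real CARD('a)) ^ length (a # w))"
    using Cons by (simp add: emeasure_pmf_single ennreal_mult'[symmetric] mult.commute)
  finally show ?case .
qed

lemma is_stream_law_uniform_stream: "is_stream_law W (uniform_stream :: 'a::finite stream measure)"
  unfolding is_stream_law_def
  by (simp add: prob_space_uniform_stream sets_uniform_stream emeasure_uniform_stream_cylinder
      word_prob_W)

lemma AE_pair_fst_snd:
  assumes "prob_space M1" "prob_space M2" "AE x in M1. P x" "AE y in M2. Q y"
  shows "AE z in M1 \<Otimes>\<^sub>M M2. P (fst z) \<and> Q (snd z)"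
proof -
  interpret M1: prob_space M1 by fact
  interpret M2: prob_space M2 by fact
  interpret pair_sigma_finite M1 M2 ..
  obtain N1 where N1: "N1 \<in> sets M1" "emeasure M1 N1 = 0" "{x\<in>space M1. \<not> P x} \<subseteq> N1"
    using assms(3) unfolding eventually_ae_filter by auto
  obtain N2 where N2: "N2 \<in> sets M2" "emeasure M2 N2 = 0" "{x\<in>space M2. \<not> Q x} \<subseteq> N2"
    using assms(4) unfolding eventually_ae_filter by auto
  show ?thesis
  proof (rule AE_I)
    show "{z \<in> space (M1 \<Otimes>\<^sub>M M2). \<not> (P (fst z) \<and> Q (snd z))} \<subseteq> N1 \<times> space M2 \<union> space M1 \<times> N2"
      using N1 N2 by (auto simp: space_pair_measure)
    show "N1 \<times> space M2 \<union> space M1 \<times> N2 \<in> sets (M1 \<Otimes>\<^sub>M M2)"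
      using N1 N2 by auto
    have "emeasure (M1 \<Otimes>\<^sub>M M2) (N1 \<times> space M2 \<union> space M1 \<times> N2)
        \<le> emeasure (M1 \<Otimes>\<^sub>M M2) (N1 \<times> space M2) + emeasure (M1 \<Otimes>\<^sub>M M2) (space M1 \<times> N2)"
      by (rule emeasure_subadditive) (use N1 N2 in auto)
    also have "\<dots> = 0"
      using N1 N2 M2.emeasure_pair_measure_Times[OF N1(1) sets.top[of M2]]
        M2.emeasure_pair_measure_Times[OF sets.top[of M1] N2(1)]
      by simp
    finally show "emeasure (M1 \<Otimes>\<^sub>M M2) (N1 \<times> space M2 \<union> space M1 \<times> N2) = 0"
      by simp
  qed
qed

lemma theta_sum_tendsto_AE:
  fixes G1 :: "('q1::finite, 'a::finite) pfsa" and G2 :: "('q2::finite, 'a) pfsa"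
  assumes G1: "is_pfsa G1" "strongly_connected G1" "is_stream_law G1 M1"
    and G2: "is_pfsa G2" "strongly_connected G2" "is_stream_law G2 M2"
  shows "AE \<omega> in M1 \<Otimes>\<^sub>M M2.
    ((\<lambda>(n1, n2). theta_sum (stake n1 (fst \<omega>)) (stake n2 (snd \<omega>)))
      \<longlongrightarrow> deriv_distance (limit_sym_deriv G1) (limit_sym_deriv G2)) (sequentially \<times>\<^sub>F sequentially)"
proof -
  interpret S1: sc_stream_law G1 M1
    using G1 by unfold_locales auto
  interpret S2: sc_stream_law G2 M2
    using G2 by unfold_locales auto
  have "AE \<omega> in M1 \<Otimes>\<^sub>M M2.
      (\<forall>x \<sigma>. (\<lambda>n. sym_deriv (stake n (fst \<omega>)) x \<sigma>) \<longlonglongrightarrow> limit_sym_deriv G1 x \<sigma>) \<and>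
      (\<forall>x \<sigma>. (\<lambda>n. sym_deriv (stake n (snd \<omega>)) x \<sigma>) \<longlonglongrightarrow> limit_sym_deriv G2 x \<sigma>)"
    by (intro AE_pair_fst_snd S1.sym_deriv_tendsto_AE S2.sym_deriv_tendsto_AE
        S1.prob_space_axioms S2.prob_space_axioms)
  then show ?thesis
  proof eventually_elim
    case (elim \<omega>)
    have "((\<lambda>p. deriv_distance (sym_deriv (stake (fst p) (fst \<omega>))) (sym_deriv (stake (snd p) (snd \<omega>))))
        \<longlongrightarrow> deriv_distance (limit_sym_deriv G1) (limit_sym_deriv G2)) (sequentially \<times>\<^sub>F sequentially)"
    proof (rule deriv_distance_tendsto)
      show "((\<lambda>p. sym_deriv (stake (fst p) (fst \<omega>)) x \<sigma>) \<longlongrightarrow> limit_sym_deriv G1 x \<sigma>)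
          (sequentially \<times>\<^sub>F sequentially)" for x \<sigma>
        using elim by (intro filterlim_compose[OF _ filterlim_fst]) auto
      show "((\<lambda>p. sym_deriv (stake (snd p) (snd \<omega>)) x \<sigma>) \<longlongrightarrow> limit_sym_deriv G2 x \<sigma>)
          (sequentially \<times>\<^sub>F sequentially)" for x \<sigma>
        using elim by (intro filterlim_compose[OF _ filterlim_snd]) auto
    qed (use G1 G2 in \<open>simp_all add: sym_deriv_bounds limit_sym_deriv_bounds\<close>)
    then show ?case
      by (simp add: theta_sum_eq_deriv_distance split_def)
  qed
qed

lemma Theta_eq_deriv_distance:
  fixes G1 :: "('q1::finite, 'a::finite) pfsa" and G2 :: "('q2::finite, 'a) pfsa"
  assumes G1: "is_pfsa G1" "strongly_connected G1" "is_stream_law G1 M1"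
    and G2: "is_pfsa G2" "strongly_connected G2" "is_stream_law G2 M2"
  shows "Theta G1 G2 = deriv_distance (limit_sym_deriv G1) (limit_sym_deriv G2)"
  unfolding Theta_def
proof (rule the_equality)
  show "\<forall>M1 M2. is_stream_law G1 M1 \<longrightarrow> is_stream_law G2 M2 \<longrightarrow>
      (AE \<omega> in M1 \<Otimes>\<^sub>M M2. ((\<lambda>(n1, n2). theta_sum (stake n1 (fst \<omega>)) (stake n2 (snd \<omega>)))
        \<longlongrightarrow> deriv_distance (limit_sym_deriv G1) (limit_sym_deriv G2)) (sequentially \<times>\<^sub>F sequentially))"
    using theta_sum_tendsto_AE[OF G1(1,2) _ G2(1,2)] by blast
next
  interpret prob_space "M1 \<Otimes>\<^sub>M M2"
    using G1(3) G2(3) by (intro prob_space_pair) (simp_all add: is_stream_law_def)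
  fix \<theta>
  assume "\<forall>M1 M2. is_stream_law G1 M1 \<longrightarrow> is_stream_law G2 M2 \<longrightarrow>
      (AE \<omega> in M1 \<Otimes>\<^sub>M M2. ((\<lambda>(n1, n2). theta_sum (stake n1 (fst \<omega>)) (stake n2 (snd \<omega>)))
        \<longlongrightarrow> \<theta>) (sequentially \<times>\<^sub>F sequentially))"
  then have "AE \<omega> in M1 \<Otimes>\<^sub>M M2. ((\<lambda>(n1, n2). theta_sum (stake n1 (fst \<omega>)) (stake n2 (snd \<omega>)))
        \<longlongrightarrow> \<theta>) (sequentially \<times>\<^sub>F sequentially)"
    using G1(3) G2(3) by blast
  with theta_sum_tendsto_AE[OF G1 G2]
  have "AE \<omega> in M1 \<Otimes>\<^sub>M M2. \<theta> = deriv_distance (limit_sym_deriv G1) (limit_sym_deriv G2)"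
  proof eventually_elim
    case (elim \<omega>)
    have "(sequentially \<times>\<^sub>F sequentially :: (nat \<times> nat) filter) \<noteq> bot"
      by (simp add: prod_filter_eq_bot)
    from tendsto_unique[OF this elim(2) elim(1)] show ?case .
  qed
  then show "\<theta> = deriv_distance (limit_sym_deriv G1) (limit_sym_deriv G2)"
    by simp
qed

theorem mainTheorem14:
  fixes G :: "('q::finite, 'a::finite) pfsa"
    and M :: "'a stream measure"
    and \<epsilon> :: real
  assumes "is_pfsa G" and "strongly_connected G"
    and "is_stream_law G M"
    and "\<epsilon> > 0"
  shows "AE \<omega> in M. \<exists>L.
           ((\<lambda>n. \<bar>Theta G (W :: (unit, 'a) pfsa)
                  - zeta_hat (stake n \<omega>) (ln (1 / \<epsilon>) / ln (real CARD('a)))\<bar>) \<longlonglongrightarrow> L)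
           \<and> L \<le> \<epsilon>"
proof -
  interpret sc_stream_law G M
    using assms by unfold_locales auto
  define l where "l = ln (1 / \<epsilon>) / ln (real CARD('a))"
  let ?\<phi> = "limit_sym_deriv G"
  have Theta_eq: "Theta G (W :: (unit, 'a) pfsa) = deriv_distance ?\<phi> (\<lambda>_. unif)"
    using Theta_eq_deriv_distance[OF assms(1-3) is_pfsa_W strongly_connected_W is_stream_law_uniform_stream]
    by (simp add: limit_sym_deriv_W)
  have approx: "\<bar>deriv_distance ?\<phi> (\<lambda>_. unif) - deriv_distance_upto ?\<phi> (\<lambda>_. unif) l\<bar> \<le> \<epsilon>"
    unfolding l_def using assms limit_sym_deriv_bounds unif_bounds
    by (intro deriv_distance_upto_approx) auto
  from sym_deriv_tendsto_AE show ?thesis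
    unfolding l_def[symmetric]
  proof eventually_elim
    case (elim \<omega>)
    then have "(\<lambda>n. zeta_hat (stake n \<omega>) l) \<longlonglongrightarrow> deriv_distance_upto ?\<phi> (\<lambda>_. unif) l"
      by (simp add: zeta_hat_eq_deriv_distance_upto deriv_distance_upto_tendsto)
    then have "(\<lambda>n. \<bar>Theta G (W :: (unit, 'a) pfsa) - zeta_hat (stake n \<omega>) l\<bar>)
        \<longlonglongrightarrow> \<bar>deriv_distance ?\<phi> (\<lambda>_. unif) - deriv_distance_upto ?\<phi> (\<lambda>_. unif) l\<bar>"
      unfolding Theta_eq by (intro tendsto_intros)
    with approx show ?case
      by blast
  qed
qed

end
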